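(* Let $a,b$ be positive integers with $a\equiv 0\pmod b$, let $n\geq 1$, and let $G$ be a regular graph. If $aG\circ nK_1$ is distance magic, then $bG\circ \frac{a}{b}(nK_1)$ is distance magic.
   Context: A graph $G$ on $v$ vertices is distance magic if there is a bijection $f:V(G)\to\{1,\ldots,v\}$ and a constant $k$ such that for every vertex $x$, $\sum_{y\in N(x)}f(y)=k$, where $N(x)$ is the set of neighbours of $x$. For a positive integer $c$, $cH$ denotes the disjoint union of $c$ copies of $H$; $nK_1$ is the edgeless graph on $n$ vertices (so $\frac{a}{b}(nK_1)$ is the edgeless graph on $\frac{an}{b}$ vertices). The lexicographic product $G\circ H$ has vertex set $V(G)\times V(H)$, with $(g,h)$ adjacent to $(g',h')$ iff either $gg'\in E(G)$, or $g=g'$ and $hh'\in E(H)$. *)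

theory Defs
  imports Main
begin

type_synonym 'a graph = "'a set \<times> ('a \<Rightarrow> 'a \<Rightarrow> bool)"

definition verts :: "'a graph \<Rightarrow> 'a set" where "verts G = fst G"
definition adj :: "'a graph \<Rightarrow> 'a \<Rightarrow> 'a \<Rightarrow> bool" where "adj G = snd G"

definition simple_graph :: "'a graph \<Rightarrow> bool" where
  "simple_graph G \<longleftrightarrow> finite (verts G)
     \<and> (\<forall>x y. adj G x y \<longrightarrow> x \<in> verts G \<and> y \<in> verts G)
     \<and> (\<forall>x y. adj G x y \<longrightarrow> adj G y x)
     \<and> (\<forall>x. \<not> adj G x x)"

definition nbhd :: "'a graph \<Rightarrow> 'a \<Rightarrow> 'a set" where
  "nbhd G x = {y \<in> verts G. adj G x y}"

definition regular :: "'a graph \<Rightarrow> bool" where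
  "regular G \<longleftrightarrow> (\<exists>r. \<forall>x \<in> verts G. card (nbhd G x) = r)"

definition distance_magic :: "'a graph \<Rightarrow> bool" where
  "distance_magic G \<longleftrightarrow> (\<exists>f :: 'a \<Rightarrow> nat. \<exists>k.
      bij_betw f (verts G) {1..card (verts G)} \<and>
      (\<forall>x \<in> verts G. (\<Sum>y \<in> nbhd G x. f y) = k))"

text \<open>cH: disjoint union of c copies of H, copy index in {0..<c}.\<close>
definition copies :: "nat \<Rightarrow> 'a graph \<Rightarrow> (nat \<times> 'a) graph" where
  "copies c H = ({0..<c} \<times> verts H,
                 \<lambda>(i, x) (j, y). i = j \<and> adj H x y)"

definition empty_graph :: "nat \<Rightarrow> nat graph" where
  "empty_graph n = ({0..<n}, \<lambda>_ _. False)"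

definition lex_prod :: "'a graph \<Rightarrow> 'b graph \<Rightarrow> ('a \<times> 'b) graph" where
  "lex_prod G H = (verts G \<times> verts H,
     \<lambda>(g, h) (g', h'). g \<in> verts G \<and> g' \<in> verts G \<and> h \<in> verts H \<and> h' \<in> verts H \<and>
        (adj G g g' \<or> (g = g' \<and> adj H h h')))"

end

theory Submission
  imports Defs
begin

(* Write a = b c. Splitting the layer index m < c n of b G \<circ> (c n) K_1 as m = t n + j, the vertex
   ((i, x), m) corresponds to the vertex ((i c + t, x), j) of a G \<circ> n K_1. In both graphs the
   neighbourhood of a vertex over x in copy i consists of all layers over the G-neighbours of x in
   that copy, so a neighbourhood in the first graph is the disjoint union of the c neighbourhoods of
   the vertices ((i c + t, x), 0), t < c, in the second. A distance magic labelling with constant k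
   therefore pulls back to one with constant c k. *)

lemma mult_add_less_mult:
  fixes t j c n :: nat
  assumes "t < c" and "j < n"
  shows "t * n + j < c * n"
proof -
  have "t * n + j < (t + 1) * n" using assms by simp
  also have "\<dots> \<le> c * n" using assms by (intro mult_right_mono) auto
  finally show ?thesis .
qed

lemma bij_betw_div_mod:
  fixes c n :: nat
  shows "bij_betw (\<lambda>m. (m div n, m mod n)) {..<c * n} ({..<c} \<times> {..<n})"
proof (rule bij_betw_byWitness[where f' = "\<lambda>(t, j). t * n + j"])
  show "(\<lambda>(t, j). t * n + j) ` ({..<c} \<times> {..<n}) \<subseteq> {..<c * n}"
    by (auto intro: mult_add_less_mult)
  show "(\<lambda>m. (m div n, m mod n)) ` {..<c * n} \<subseteq> {..<c} \<times> {..<n}"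
    by (cases "n = 0") (auto simp: less_mult_imp_div_less)
qed auto

lemma sum_lessThan_mult_div_mod:
  fixes F :: "nat \<Rightarrow> nat \<Rightarrow> 'a :: comm_monoid_add"
  shows "(\<Sum>m<c * n. F (m div n) (m mod n)) = (\<Sum>t<c. \<Sum>j<n. F t j)"
  using sum.reindex_bij_betw[OF bij_betw_div_mod, of "case_prod F" n c]
  by (simp add: sum.cartesian_product)

lemma verts_lex_prod_copies_empty_graph:
  "verts (lex_prod (copies c G) (empty_graph m)) = ({..<c} \<times> verts G) \<times> {..<m}"
  by (simp add: lex_prod_def copies_def empty_graph_def verts_def atLeast0LessThan)

lemma nbhd_lex_prod_copies_empty_graph:
  assumes "i < c" and "x \<in> verts G" and "j < m"
  shows "nbhd (lex_prod (copies c G) (empty_graph m)) ((i, x), j)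
       = (\<lambda>(y, j'). ((i, y), j')) ` (nbhd G x \<times> {..<m})"
  using assms by (force simp: nbhd_def lex_prod_def copies_def empty_graph_def verts_def adj_def)

lemma sum_nbhd_lex_prod_copies_empty_graph:
  assumes "i < c" and "x \<in> verts G" and "j < m"
  shows "(\<Sum>v \<in> nbhd (lex_prod (copies c G) (empty_graph m)) ((i, x), j). F v)
       = (\<Sum>y \<in> nbhd G x. \<Sum>j'<m. F ((i, y), j'))"
proof -
  have "inj_on (\<lambda>(y, j'). ((i, y), j')) (nbhd G x \<times> {..<m})"
    by (auto simp: inj_on_def)
  then show ?thesis
    using assms by (simp add: nbhd_lex_prod_copies_empty_graph sum.reindex sum.cartesian_product case_prod_unfold)
qed

definition regroup :: "nat \<Rightarrow> nat \<Rightarrow> (nat \<times> 'a) \<times> nat \<Rightarrow> (nat \<times> 'a) \<times> nat" where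
  "regroup c n = (\<lambda>((i, x), m). ((i * c + m div n, x), m mod n))"

lemma bij_betw_regroup:
  "bij_betw (regroup c n)
     (verts (lex_prod (copies b G) (empty_graph (c * n))))
     (verts (lex_prod (copies (b * c) G) (empty_graph n)))"
  unfolding verts_lex_prod_copies_empty_graph
proof (rule bij_betw_byWitness[where f' = "\<lambda>((i, x), j). ((i div c, x), (i mod c) * n + j)"])
  have "(i * c + m div n) div c = i" and "(i * c + m div n) mod c = m div n" if "m < c * n" for i m
    using less_mult_imp_div_less[OF that] by auto
  then show "\<forall>v \<in> ({..<b} \<times> verts G) \<times> {..<c * n}.
          (\<lambda>((i, x), j). ((i div c, x), (i mod c) * n + j)) (regroup c n v) = v"
    by (auto simp: regroup_def)
  show "\<forall>v \<in> ({..<b * c} \<times> verts G) \<times> {..<n}.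
          regroup c n ((\<lambda>((i, x), j). ((i div c, x), (i mod c) * n + j)) v) = v"
    by (auto simp: regroup_def)
  show "regroup c n ` (({..<b} \<times> verts G) \<times> {..<c * n}) \<subseteq> ({..<b * c} \<times> verts G) \<times> {..<n}"
    by (cases "n = 0") (auto simp: regroup_def less_mult_imp_div_less intro: mult_add_less_mult)
  show "(\<lambda>((i, x), j). ((i div c, x), (i mod c) * n + j)) ` (({..<b * c} \<times> verts G) \<times> {..<n})
          \<subseteq> ({..<b} \<times> verts G) \<times> {..<c * n}"
    by (cases "c = 0") (auto simp: less_mult_imp_div_less intro: mult_add_less_mult)
qed

lemma sum_nbhd_regroup:
  assumes magic: "\<forall>v \<in> verts (lex_prod (copies (b * c) G) (empty_graph n)).
      (\<Sum>y \<in> nbhd (lex_prod (copies (b * c) G) (empty_graph n)) v. f y) = k"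
    and v: "v \<in> verts (lex_prod (copies b G) (empty_graph (c * n)))"
  shows "(\<Sum>y \<in> nbhd (lex_prod (copies b G) (empty_graph (c * n))) v. f (regroup c n y)) = c * k"
proof -
  obtain i x m where v_eq: "v = ((i, x), m)" and i: "i < b" and x: "x \<in> verts G" and m: "m < c * n"
    using v by (auto simp: verts_lex_prod_copies_empty_graph)
  have "(\<Sum>y \<in> nbhd (lex_prod (copies b G) (empty_graph (c * n))) v. f (regroup c n y))
      = (\<Sum>y \<in> nbhd G x. \<Sum>m' < c * n. f ((i * c + m' div n, y), m' mod n))"
    using sum_nbhd_lex_prod_copies_empty_graph[OF i x m, of "\<lambda>y. f (regroup c n y)"]
    by (simp add: v_eq regroup_def)
  also have "\<dots> = (\<Sum>y \<in> nbhd G x. \<Sum>t < c. \<Sum>j < n. f ((i * c + t, y), j))"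
    by (intro sum.cong refl sum_lessThan_mult_div_mod)
  also have "\<dots> = (\<Sum>t < c. \<Sum>y \<in> nbhd G x. \<Sum>j < n. f ((i * c + t, y), j))"
    by (rule sum.swap)
  also have "\<dots> = (\<Sum>t < c. k)"
  proof (rule sum.cong[OF refl])
    fix t assume "t \<in> {..<c}"
    then have t: "i * c + t < b * c" using i by (simp add: mult_add_less_mult)
    have n: "0 < n" using m by (cases "n = 0") auto
    have "((i * c + t, x), 0) \<in> verts (lex_prod (copies (b * c) G) (empty_graph n))"
      using t x n by (simp add: verts_lex_prod_copies_empty_graph)
    then show "(\<Sum>y \<in> nbhd G x. \<Sum>j < n. f ((i * c + t, y), j)) = k"
      using magic sum_nbhd_lex_prod_copies_empty_graph[OF t x n, of f] by simp
  qed
  finally show ?thesis by simp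
qed

lemma distance_magic_regroup:
  assumes "distance_magic (lex_prod (copies (b * c) G) (empty_graph n))"
  shows "distance_magic (lex_prod (copies b G) (empty_graph (c * n)))"
proof -
  let ?H = "lex_prod (copies b G) (empty_graph (c * n))"
  let ?H' = "lex_prod (copies (b * c) G) (empty_graph n)"
  obtain f k where f: "bij_betw f (verts ?H') {1..card (verts ?H')}"
    and magic: "\<forall>v \<in> verts ?H'. (\<Sum>y \<in> nbhd ?H' v. f y) = k"
    using assms unfolding distance_magic_def by blast
  have "bij_betw (f \<circ> regroup c n) (verts ?H) {1..card (verts ?H)}"
    using bij_betw_trans[OF bij_betw_regroup f] bij_betw_same_card[OF bij_betw_regroup[of c n b G]]
    by simp
  moreover have "\<forall>v \<in> verts ?H. (\<Sum>y \<in> nbhd ?H v. (f \<circ> regroup c n) y) = c * k"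
    using sum_nbhd_regroup[OF magic] by simp
  ultimately show ?thesis
    unfolding distance_magic_def by blast
qed

theorem theorem15:
  fixes G :: "'a graph" and a b n :: nat
  assumes "simple_graph G" and "regular G"
    and "a > 0" and "b > 0" and "b dvd a" and "n \<ge> 1"
    and "distance_magic (lex_prod (copies a G) (empty_graph n))"
  shows "distance_magic (lex_prod (copies b G) (empty_graph ((a div b) * n)))"
proof -
  have "a = b * (a div b)" using \<open>b dvd a\<close> by simp
  then show ?thesis
    using distance_magic_regroup[of b "a div b" G n] \<open>distance_magic (lex_prod (copies a G) (empty_graph n))\<close>
    by simp
qed

end
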